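(* An element $\boldsymbol\pi\in H_{1,2,2}$ is a prime of $H_{1,2,2}$ if and only if $N(\boldsymbol\pi)$ is a rational prime.
   Context: Let $\mathbf{i},\mathbf{j},\mathbf{k}$ be the standard quaternion units; $\overline{\mathbf{q}}$ is quaternion conjugation and $N(\mathbf{q})=\mathbf{q}\overline{\mathbf{q}}$. $H_{1,2,2}$ is the subring of the quaternions equal to the $\mathbb{Z}$-module generated by $\mathbf{v}_1=1$, $\mathbf{v}_2=\mathbf{i}$, $\mathbf{v}_3=\tfrac12(1+\mathbf{i}+\sqrt2\,\mathbf{j})$, $\mathbf{v}_4=\tfrac12(1+\mathbf{i}+\sqrt2\,\mathbf{k})$. A unit is an element invertible in $H_{1,2,2}$ (equivalently of norm 1). A prime of $H_{1,2,2}$ is a nonzero nonunit $\boldsymbol\pi$ such that whenever $\boldsymbol\pi=\mathbf{a}\mathbf{b}$ with $\mathbf{a},\mathbf{b}\in H_{1,2,2}$, at least one of $\mathbf{a},\mathbf{b}$ is a unit. *)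

theory Defs
  imports Complex_Main "HOL-Computational_Algebra.Primes"
begin

datatype quat = Quat (qre: real) (qi: real) (qj: real) (qk: real)

lemma quat_eqI: "qre x = qre y \<Longrightarrow> qi x = qi y \<Longrightarrow> qj x = qj y \<Longrightarrow> qk x = qk y \<Longrightarrow> x = y"
  by (cases x, cases y) simp

instantiation quat :: ring_1
begin
definition "0 = Quat 0 0 0 0"
definition "1 = Quat 1 0 0 0"
definition "x + y = Quat (qre x + qre y) (qi x + qi y) (qj x + qj y) (qk x + qk y)"
definition "x - y = Quat (qre x - qre y) (qi x - qi y) (qj x - qj y) (qk x - qk y)"
definition "- x = Quat (- qre x) (- qi x) (- qj x) (- qk x)"
definition "x * y = Quat
   (qre x * qre y - qi x * qi y - qj x * qj y - qk x * qk y)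
   (qre x * qi y + qi x * qre y + qj x * qk y - qk x * qj y)
   (qre x * qj y - qi x * qk y + qj x * qre y + qk x * qi y)
   (qre x * qk y + qi x * qj y - qj x * qi y + qk x * qre y)"
instance
  by standard (auto intro!: quat_eqI simp: zero_quat_def one_quat_def plus_quat_def
      minus_quat_def uminus_quat_def times_quat_def algebra_simps)
end

definition qI :: quat where "qI = Quat 0 1 0 0"
definition qJ :: quat where "qJ = Quat 0 0 1 0"
definition qK :: quat where "qK = Quat 0 0 0 1"
definition qcnj :: "quat \<Rightarrow> quat" where "qcnj q = Quat (qre q) (- qi q) (- qj q) (- qk q)"
definition qnorm :: "quat \<Rightarrow> quat" where "qnorm q = q * qcnj q"

definition qscale :: "real \<Rightarrow> quat \<Rightarrow> quat" where
  "qscale r q = Quat (r * qre q) (r * qi q) (r * qj q) (r * qk q)"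

definition v1 :: quat where "v1 = 1"
definition v2 :: quat where "v2 = qI"
definition v3 :: quat where "v3 = qscale (1/2) (1 + qI + qscale (sqrt 2) qJ)"
definition v4 :: quat where "v4 = qscale (1/2) (1 + qI + qscale (sqrt 2) qK)"

definition H122 :: "quat set" where
  "H122 = {of_int a * v1 + of_int b * v2 + of_int c * v3 + of_int d * v4 | a b c d :: int. True}"

definition H122_unit :: "quat \<Rightarrow> bool" where
  "H122_unit u \<longleftrightarrow> u \<in> H122 \<and> (\<exists>w\<in>H122. u * w = 1 \<and> w * u = 1)"

definition H122_prime :: "quat \<Rightarrow> bool" where
  "H122_prime p \<longleftrightarrow> p \<in> H122 \<and> p \<noteq> 0 \<and> \<not> H122_unit p \<and>
     (\<forall>a\<in>H122. \<forall>b\<in>H122. p = a * b \<longrightarrow> H122_unit a \<or> H122_unit b)"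

end

theory Submission
  imports Defs
begin

text \<open>
  The order \<open>H122\<close> is Euclidean for the norm: every real quaternion lies at squared
  distance less than 1 from a point of \<open>H122\<close>. Hence any two elements have a left
  greatest common divisor that is a left linear combination of them.

  If \<open>N(\<pi>) = p\<close> is prime, a factorisation \<open>\<pi> = a b\<close> forces \<open>N(a) N(b) = p\<close>, so one factor
  has norm 1 and is a unit. Conversely, let \<open>p\<close> be a prime dividing \<open>N(\<alpha>)\<close>, with \<open>\<alpha>\<close> not
  divisible by \<open>p\<close>, and let \<open>\<delta>\<close> be the left gcd of \<open>\<alpha>\<close> and \<open>p\<close>. If \<open>\<delta>\<close> were a unit, then
  \<open>1 = u \<alpha> + v p\<close> and \<open>\<alpha>\<^sup>* = u \<alpha> \<alpha>\<^sup>* + v p \<alpha>\<^sup>*\<close> would be divisible by \<open>p\<close>; if \<open>N(\<delta>) = p\<^sup>2\<close>,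
  then \<open>\<delta>\<close> is an associate of \<open>p\<close> and again \<open>p\<close> divides \<open>\<alpha>\<close>. So \<open>N(\<delta>) = p\<close>. Applied
  to \<open>\<alpha> = x + y\<^bold>i + \<surd>2\<^bold>j\<close> with \<open>p | x\<^sup>2 + y\<^sup>2 + 2\<close> this shows that every rational prime
  is a norm \<open>N(\<rho>)\<close>; a prime \<open>\<pi>\<close> then cannot be divisible by \<open>p = \<rho> \<rho>\<^sup>*\<close>, and applied
  to \<open>\<alpha> = \<pi>\<close> it exhibits a right factor of norm \<open>p\<close>, whose cofactor must be a unit.
\<close>

lemma quat_component_simps [simp]:
  "qre 0 = 0" "qi 0 = 0" "qj 0 = 0" "qk 0 = 0"
  "qre 1 = 1" "qi 1 = 0" "qj 1 = 0" "qk 1 = 0"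
  "qre (x + y) = qre x + qre y" "qi (x + y) = qi x + qi y"
  "qj (x + y) = qj x + qj y" "qk (x + y) = qk x + qk y"
  "qre (x - y) = qre x - qre y" "qi (x - y) = qi x - qi y"
  "qj (x - y) = qj x - qj y" "qk (x - y) = qk x - qk y"
  "qre (- x) = - qre x" "qi (- x) = - qi x" "qj (- x) = - qj x" "qk (- x) = - qk x"
  "qre (x * y) = qre x * qre y - qi x * qi y - qj x * qj y - qk x * qk y"
  "qi (x * y) = qre x * qi y + qi x * qre y + qj x * qk y - qk x * qj y"
  "qj (x * y) = qre x * qj y - qi x * qk y + qj x * qre y + qk x * qi y"
  "qk (x * y) = qre x * qk y + qi x * qj y - qj x * qi y + qk x * qre y"
  "qre (qcnj x) = qre x" "qi (qcnj x) = - qi x" "qj (qcnj x) = - qj x" "qk (qcnj x) = - qk x"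
  by (simp_all add: zero_quat_def one_quat_def plus_quat_def minus_quat_def uminus_quat_def
      times_quat_def qcnj_def)

lemma of_nat_quat: "(of_nat n :: quat) = Quat (real n) 0 0 0"
  by (induction n) (auto intro: quat_eqI)

lemma of_int_quat: "(of_int n :: quat) = Quat (real_of_int n) 0 0 0"
  by (cases n rule: int_cases) (auto intro!: quat_eqI simp: of_nat_quat)

lemma qcnj_qcnj [simp]: "qcnj (qcnj x) = x"
  by (rule quat_eqI) simp_all

lemma qcnj_mult: "qcnj (x * y) = qcnj y * qcnj x"
  by (rule quat_eqI) (simp_all add: algebra_simps)

lemma qcnj_of_nat [simp]: "qcnj (of_nat n) = of_nat n"
  by (rule quat_eqI) (simp_all add: of_nat_quat)

definition qnormsq :: "quat \<Rightarrow> real" where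
  "qnormsq q = qre q ^ 2 + qi q ^ 2 + qj q ^ 2 + qk q ^ 2"

lemma qnormsq_nonneg: "qnormsq x \<ge> 0"
  by (simp add: qnormsq_def)

lemma qnormsq_eq_0_iff: "qnormsq x = 0 \<longleftrightarrow> x = 0"
  by (cases x) (auto simp: qnormsq_def zero_quat_def add_nonneg_eq_0_iff)

lemma qnormsq_mult: "qnormsq (x * y) = qnormsq x * qnormsq y"
  by (simp add: qnormsq_def power2_eq_square algebra_simps)

lemma mult_qcnj_right: "x * qcnj x = Quat (qnormsq x) 0 0 0"
  by (rule quat_eqI) (simp_all add: qnormsq_def power2_eq_square algebra_simps)

lemma mult_qcnj_left: "qcnj x * x = Quat (qnormsq x) 0 0 0"
  by (rule quat_eqI) (simp_all add: qnormsq_def power2_eq_square algebra_simps)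

definition qinv :: "quat \<Rightarrow> quat" where
  "qinv x = qscale (1 / qnormsq x) (qcnj x)"

lemma qinv_mult_left:
  assumes "x \<noteq> 0"
  shows "qinv x * x = 1"
proof -
  have "qnormsq x \<noteq> 0"
    using assms by (simp add: qnormsq_eq_0_iff)
  moreover have "qscale r y * z = qscale r (y * z)" for r y z
    by (rule quat_eqI) (simp_all add: qscale_def algebra_simps)
  ultimately show ?thesis
    by (simp only: qinv_def mult_qcnj_left) (simp add: qscale_def one_quat_def)
qed

definition hq :: "int \<Rightarrow> int \<Rightarrow> int \<Rightarrow> int \<Rightarrow> quat" where
  "hq a b c d = Quat (a + (c + d) / 2) (b + (c + d) / 2) (c * sqrt 2 / 2) (d * sqrt 2 / 2)"

lemma mem_H122_iff: "x \<in> H122 \<longleftrightarrow> (\<exists>a b c d. x = hq a b c d)"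
proof -
  have "of_int a * v1 + of_int b * v2 + of_int c * v3 + of_int d * v4 = hq a b c d" for a b c d
    by (rule quat_eqI) (simp_all add: hq_def of_int_quat v1_def v2_def v3_def v4_def
        qI_def qJ_def qK_def qscale_def field_simps)
  then show ?thesis
    by (auto simp: H122_def)
qed

lemma hq_mem_H122 [simp]: "hq a b c d \<in> H122"
  by (auto simp: mem_H122_iff)

lemma H122E:
  assumes "x \<in> H122"
  obtains a b c d where "x = hq a b c d"
  using assms by (auto simp: mem_H122_iff)

lemma hq_add: "hq a b c d + hq e f g h = hq (a + e) (b + f) (c + g) (d + h)"
  by (rule quat_eqI) (simp_all add: hq_def field_simps)

lemma hq_diff: "hq a b c d - hq e f g h = hq (a - e) (b - f) (c - g) (d - h)"
  by (rule quat_eqI) (simp_all add: hq_def field_simps)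

lemma hq_mult: "hq a b c d * hq e f g h =
  hq (a*e - b*f - b*g - c*g - d*f - d*g - d*h) (a*f + b*e + b*h + c*f + c*h - d*g)
     (a*g - b*h + c*e + c*g + d*f + d*g) (a*h + b*g - c*f + d*e + d*g + d*h)"
  by (rule quat_eqI) (simp_all add: hq_def algebra_simps add_divide_distrib diff_divide_distrib)

lemma qcnj_hq: "qcnj (hq a b c d) = hq (a + c + d) (- b) (- c) (- d)"
  by (rule quat_eqI) (simp_all add: hq_def field_simps)

lemma of_nat_eq_hq: "of_nat n = hq (int n) 0 0 0"
  by (rule quat_eqI) (simp_all add: hq_def of_nat_quat)

lemma H122_add: "x \<in> H122 \<Longrightarrow> y \<in> H122 \<Longrightarrow> x + y \<in> H122"
  by (auto elim!: H122E simp: hq_add)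

lemma H122_diff: "x \<in> H122 \<Longrightarrow> y \<in> H122 \<Longrightarrow> x - y \<in> H122"
  by (auto elim!: H122E simp: hq_diff)

lemma H122_mult: "x \<in> H122 \<Longrightarrow> y \<in> H122 \<Longrightarrow> x * y \<in> H122"
  by (auto elim!: H122E simp: hq_mult)

lemma H122_qcnj: "x \<in> H122 \<Longrightarrow> qcnj x \<in> H122"
  by (auto elim!: H122E simp: qcnj_hq)

lemma H122_of_nat [simp]: "of_nat n \<in> H122"
  by (simp add: of_nat_eq_hq)

lemma H122_0 [simp]: "0 \<in> H122" and H122_1 [simp]: "1 \<in> H122"
  using H122_of_nat[of 0] H122_of_nat[of 1] by simp_all

lemma qnormsq_hq:
  "qnormsq (hq a b c d) = of_int (a^2 + b^2 + (a + b) * (c + d) + c^2 + c * d + d^2)"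
  by (simp add: qnormsq_def hq_def power2_eq_square field_simps)

definition hnorm :: "quat \<Rightarrow> nat" where
  "hnorm x = nat \<lfloor>qnormsq x\<rfloor>"

lemma hnorm_hq: "hnorm (hq a b c d) = nat (a^2 + b^2 + (a + b) * (c + d) + c^2 + c * d + d^2)"
  unfolding hnorm_def qnormsq_hq floor_of_int ..

lemma qnormsq_eq_hnorm:
  assumes "x \<in> H122"
  shows "qnormsq x = real (hnorm x)"
proof -
  obtain a b c d where x: "x = hq a b c d"
    using assms by (rule H122E)
  define k where "k = a^2 + b^2 + (a + b) * (c + d) + c^2 + c * d + d^2"
  have "qnormsq x = of_int k"
    by (simp add: x qnormsq_hq k_def)
  moreover have "k \<ge> 0"
    using qnormsq_nonneg[of x] calculation by simp
  ultimately show ?thesis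
    by (simp add: hnorm_def)
qed

lemma hnorm_mult: "x \<in> H122 \<Longrightarrow> y \<in> H122 \<Longrightarrow> hnorm (x * y) = hnorm x * hnorm y"
  using qnormsq_eq_hnorm[of x] qnormsq_eq_hnorm[of y] qnormsq_eq_hnorm[of "x * y"]
    H122_mult[of x y] qnormsq_mult[of x y]
  by (metis of_nat_eq_iff of_nat_mult)

lemma hnorm_eq_0_iff: "x \<in> H122 \<Longrightarrow> hnorm x = 0 \<longleftrightarrow> x = 0"
  by (metis qnormsq_eq_hnorm qnormsq_eq_0_iff of_nat_eq_0_iff)

lemma hnorm_of_nat [simp]: "hnorm (of_nat n) = n ^ 2"
  by (simp add: of_nat_eq_hq hnorm_hq power2_eq_square nat_mult_distrib)

lemma hnorm_qcnj [simp]: "hnorm (qcnj x) = hnorm x"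
  by (simp add: hnorm_def qnormsq_def)

lemma of_nat_hnorm: "x \<in> H122 \<Longrightarrow> of_nat (hnorm x) = x * qcnj x"
  by (simp add: mult_qcnj_right qnormsq_eq_hnorm of_nat_quat)

lemma qnorm_eq_of_nat_iff_hnorm: "x \<in> H122 \<Longrightarrow> qnorm x = of_nat p \<longleftrightarrow> hnorm x = p"
  by (auto simp: qnorm_def mult_qcnj_right of_nat_quat qnormsq_eq_hnorm)

lemma H122_unit_iff_hnorm: "H122_unit u \<longleftrightarrow> u \<in> H122 \<and> hnorm u = 1"
proof
  assume "H122_unit u"
  then obtain w where "u \<in> H122" "w \<in> H122" "u * w = 1"
    by (auto simp: H122_unit_def)
  then show "u \<in> H122 \<and> hnorm u = 1"
    using hnorm_mult[of u w] hnorm_of_nat[of 1] by simp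
next
  assume u: "u \<in> H122 \<and> hnorm u = 1"
  then have "u * qcnj u = 1" "qcnj u * u = 1"
    by (simp_all add: mult_qcnj_right mult_qcnj_left qnormsq_eq_hnorm one_quat_def)
  then show "H122_unit u"
    using u H122_qcnj by (auto simp: H122_unit_def)
qed

lemma H122_unit_inverse:
  assumes "H122_unit u"
  obtains w where "w \<in> H122" "w * u = 1"
  using assms by (auto simp: H122_unit_def)

lemma round_error_sq: "(x - of_int (round x))^2 \<le> (1/4 :: real)"
proof -
  have "\<bar>x - of_int (round x)\<bar> \<le> 1/2"
    using of_int_round_abs_le[of x] by linarith
  then have "\<bar>x - of_int (round x)\<bar>^2 \<le> (1/2)^2"
    by (rule power_mono) simp
  then show ?thesis
    by (simp add: power2_eq_square)
qed

lemma sqrt2_round_error_sq: "(y - round (sqrt 2 * y) * sqrt 2 / 2)^2 \<le> (1/8 :: real)"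
proof -
  have "y - round (sqrt 2 * y) * sqrt 2 / 2 = (sqrt 2 * y - round (sqrt 2 * y)) * (sqrt 2 / 2)"
    by (simp add: algebra_simps)
  then have "(y - round (sqrt 2 * y) * sqrt 2 / 2)^2
      = (sqrt 2 * y - round (sqrt 2 * y))^2 * (sqrt 2 / 2)^2"
    by (simp only: power_mult_distrib)
  also have "(sqrt 2 / 2)^2 = (1/2 :: real)"
    by (simp add: power_divide)
  finally show ?thesis
    using round_error_sq[of "sqrt 2 * y"] by simp
qed

text \<open>
  Round the \<open>\<^bold>j\<close>- and \<open>\<^bold>k\<close>-coordinates to multiples of \<open>\<surd>2/2\<close> first; the remaining
  coordinates can then be rounded to integers shifted by \<open>(c + d)/2\<close>, leaving a squared
  error of at most \<open>1/4 + 1/4 + 1/8 + 1/8\<close>.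
\<close>
lemma H122_approx: "\<exists>q\<in>H122. qnormsq (t - q) < 1"
proof -
  define c where "c = round (sqrt 2 * qj t)"
  define d where "d = round (sqrt 2 * qk t)"
  define a where "a = round (qre t - (c + d) / 2)"
  define b where "b = round (qi t - (c + d) / 2)"
  have "(qre t - (a + (c + d) / 2))^2 \<le> 1/4"
    using round_error_sq[of "qre t - (c + d) / 2"] by (simp add: a_def algebra_simps)
  moreover have "(qi t - (b + (c + d) / 2))^2 \<le> 1/4"
    using round_error_sq[of "qi t - (c + d) / 2"] by (simp add: b_def algebra_simps)
  moreover have "(qj t - c * sqrt 2 / 2)^2 \<le> 1/8" "(qk t - d * sqrt 2 / 2)^2 \<le> 1/8"
    using sqrt2_round_error_sq by (simp_all add: c_def d_def)
  ultimately have "qnormsq (t - hq a b c d) < 1"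
    by (simp add: qnormsq_def hq_def)
  then show ?thesis
    using hq_mem_H122 by blast
qed

lemma H122_division:
  assumes "\<alpha> \<in> H122" "\<delta> \<in> H122" "\<delta> \<noteq> 0"
  obtains q where "q \<in> H122" "hnorm (\<alpha> - q * \<delta>) < hnorm \<delta>"
proof -
  obtain q where q: "q \<in> H122" "qnormsq (\<alpha> * qinv \<delta> - q) < 1"
    using H122_approx by blast
  have "\<alpha> - q * \<delta> = (\<alpha> * qinv \<delta> - q) * \<delta>"
    using qinv_mult_left[OF assms(3)] by (simp add: algebra_simps mult.assoc)
  then have "qnormsq (\<alpha> - q * \<delta>) = qnormsq (\<alpha> * qinv \<delta> - q) * qnormsq \<delta>"
    by (simp add: qnormsq_mult)
  also have "\<dots> < qnormsq \<delta>"
    using q(2) assms(3) qnormsq_nonneg[of \<delta>] qnormsq_eq_0_iff[of \<delta>] by simp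
  finally have "real (hnorm (\<alpha> - q * \<delta>)) < real (hnorm \<delta>)"
    using assms q(1) by (simp add: qnormsq_eq_hnorm H122_diff H122_mult)
  then show ?thesis
    using q(1) that by simp
qed

text \<open>The gcd is a nonzero left combination of minimal norm; the division lemma shows that
  it right-divides every left combination.\<close>
lemma H122_left_gcd:
  assumes "\<alpha> \<in> H122" "\<beta> \<in> H122" "\<beta> \<noteq> 0"
  obtains \<delta> x y a b where "x \<in> H122" "y \<in> H122" "a \<in> H122" "b \<in> H122"
    "\<delta> = x * \<alpha> + y * \<beta>" "\<alpha> = a * \<delta>" "\<beta> = b * \<delta>"
proof -
  define combination where
    "combination n \<longleftrightarrow> (\<exists>x\<in>H122. \<exists>y\<in>H122. x * \<alpha> + y * \<beta> \<noteq> 0 \<and> hnorm (x * \<alpha> + y * \<beta>) = n)"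
    for n
  have "combination (hnorm \<beta>)"
    unfolding combination_def using assms by (intro bexI[of _ 0] bexI[of _ 1]) auto
  then have "combination (LEAST n. combination n)"
    by (rule LeastI)
  then obtain x y where xy: "x \<in> H122" "y \<in> H122" "x * \<alpha> + y * \<beta> \<noteq> 0"
    "hnorm (x * \<alpha> + y * \<beta>) = (LEAST n. combination n)"
    unfolding combination_def by blast
  define \<delta> where "\<delta> = x * \<alpha> + y * \<beta>"
  have \<delta>: "\<delta> \<in> H122"
    unfolding \<delta>_def using xy assms H122_add H122_mult by blast
  have right_dvd: "\<exists>a\<in>H122. u * \<alpha> + v * \<beta> = a * \<delta>" if "u \<in> H122" "v \<in> H122" for u v
  proof -
    have "u * \<alpha> + v * \<beta> \<in> H122"
      using that assms H122_add H122_mult by blast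
    then obtain q where q: "q \<in> H122" "hnorm (u * \<alpha> + v * \<beta> - q * \<delta>) < hnorm \<delta>"
      using H122_division \<delta> xy(3) unfolding \<delta>_def by blast
    have r: "u * \<alpha> + v * \<beta> - q * \<delta> = (u - q * x) * \<alpha> + (v - q * y) * \<beta>"
      unfolding \<delta>_def by (simp add: algebra_simps mult.assoc)
    have "u * \<alpha> + v * \<beta> - q * \<delta> = 0"
    proof (rule ccontr)
      assume "u * \<alpha> + v * \<beta> - q * \<delta> \<noteq> 0"
      moreover have "u - q * x \<in> H122" "v - q * y \<in> H122"
        using that q xy H122_diff H122_mult by auto
      ultimately have "combination (hnorm (u * \<alpha> + v * \<beta> - q * \<delta>))"
        unfolding combination_def r by blast
      then have "(LEAST n. combination n) \<le> hnorm (u * \<alpha> + v * \<beta> - q * \<delta>)"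
        by (rule Least_le)
      then show False
        using q(2) xy(4) \<delta>_def by simp
    qed
    then show ?thesis
      using q(1) by auto
  qed
  obtain a where "a \<in> H122" "\<alpha> = a * \<delta>"
    using right_dvd[of 1 0] by auto
  moreover obtain b where "b \<in> H122" "\<beta> = b * \<delta>"
    using right_dvd[of 0 1] by auto
  ultimately show ?thesis
    using that xy(1,2) \<delta>_def by blast
qed

lemma square_cong_imp_eq:
  fixes x x' p h :: int
  assumes p: "prime p" "2 * h + 1 = p" and x: "0 \<le> x" "x \<le> h" "0 \<le> x'" "x' \<le> h"
    and dvd: "p dvd x^2 - x'^2"
  shows "x = x'"
proof -
  have "x^2 - x'^2 = (x - x') * (x + x')"
    by (simp add: power2_eq_square algebra_simps)
  then have "p dvd x - x' \<or> p dvd x + x'"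
    using dvd p by (simp add: prime_dvd_mult_iff)
  moreover have "\<bar>x - x'\<bar> < p" "\<bar>x + x'\<bar> < p"
    using x p(2) by linarith+
  ultimately have "x - x' = 0 \<or> x + x' = 0"
    using dvd_imp_le_int[of "x - x'" p] dvd_imp_le_int[of "x + x'" p] prime_gt_0_int[OF p(1)]
    by fastforce
  then show ?thesis
    using x by linarith
qed

text \<open>Pigeonhole: the \<open>(p + 1)/2\<close> residues \<open>x\<^sup>2\<close> and the \<open>(p + 1)/2\<close> residues \<open>-c - y\<^sup>2\<close>
  with \<open>0 \<le> x, y \<le> (p - 1)/2\<close> cannot all be distinct.\<close>
lemma odd_prime_dvd_two_squares_plus:
  fixes c :: int
  assumes "prime p" "odd p"
  obtains x y :: int where "int p dvd x^2 + y^2 + c"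
proof -
  define h where "h = (int p - 1) div 2"
  have h: "2 * h + 1 = int p" "0 \<le> h"
    using assms prime_ge_2_nat[of p] unfolding h_def by (auto elim!: oddE)
  have p: "prime (int p)"
    using assms by simp
  define A where "A = (\<lambda>x. x^2 mod int p) ` {0..h}"
  define B where "B = (\<lambda>y. (- c - y^2) mod int p) ` {0..h}"
  have "inj_on (\<lambda>x. x^2 mod int p) {0..h}"
  proof (rule inj_onI)
    fix x x' assume "x \<in> {0..h}" "x' \<in> {0..h}" "x^2 mod int p = x'^2 mod int p"
    then show "x = x'"
      using square_cong_imp_eq[OF p h(1), of x x'] by (simp add: mod_eq_dvd_iff)
  qed
  then have card_A: "card A = nat (h + 1)"
    unfolding A_def by (simp add: card_image)
  have "inj_on (\<lambda>y. (- c - y^2) mod int p) {0..h}"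
  proof (rule inj_onI)
    fix y y' assume "y \<in> {0..h}" "y' \<in> {0..h}" "(- c - y^2) mod int p = (- c - y'^2) mod int p"
    then show "y = y'"
      using square_cong_imp_eq[OF p h(1), of y' y] by (simp add: mod_eq_dvd_iff)
  qed
  then have card_B: "card B = nat (h + 1)"
    unfolding B_def by (simp add: card_image)
  have "A \<inter> B \<noteq> {}"
  proof
    assume "A \<inter> B = {}"
    then have "card (A \<union> B) = card A + card B"
      by (intro card_Un_disjoint) (auto simp: A_def B_def)
    moreover have "A \<union> B \<subseteq> {0..<int p}"
      unfolding A_def B_def using h by auto
    then have "card (A \<union> B) \<le> card {0..<int p}"
      by (intro card_mono) simp_all
    ultimately show False
      using card_A card_B h by simp
  qed
  then obtain x y where "x^2 mod int p = (- c - y^2) mod int p"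
    unfolding A_def B_def by blast
  then have "int p dvd x^2 + y^2 + c"
    by (simp add: mod_eq_dvd_iff algebra_simps)
  then show ?thesis
    using that by blast
qed

lemma of_nat_dvd_if_comaximal:
  assumes "\<alpha> \<in> H122" "p dvd hnorm \<alpha>" "u \<in> H122" "v \<in> H122" "u * \<alpha> + v * of_nat p = 1"
  shows "\<exists>z\<in>H122. \<alpha> = of_nat p * z"
proof -
  obtain m where "hnorm \<alpha> = p * m"
    using assms(2) by blast
  then have norm: "\<alpha> * qcnj \<alpha> = of_nat m * of_nat p"
    using of_nat_hnorm[OF assms(1)] by (metis mult.commute of_nat_mult)
  define z where "z = u * of_nat m + v * qcnj \<alpha>"
  have z: "z \<in> H122"
    unfolding z_def using assms by (intro H122_add H122_mult H122_qcnj H122_of_nat)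
  have "qcnj \<alpha> = (u * \<alpha> + v * of_nat p) * qcnj \<alpha>"
    using assms(5) by simp
  also have "\<dots> = u * (\<alpha> * qcnj \<alpha>) + v * (of_nat p * qcnj \<alpha>)"
    by (simp add: distrib_right mult.assoc)
  also have "\<dots> = z * of_nat p"
    unfolding norm z_def mult_of_nat_commute[of p "qcnj \<alpha>"] by (simp add: distrib_right mult.assoc)
  finally have "\<alpha> = qcnj (z * of_nat p)"
    by (metis qcnj_qcnj)
  also have "\<dots> = of_nat p * qcnj z"
    by (simp add: qcnj_mult)
  finally show ?thesis
    using H122_qcnj[OF z] by blast
qed

lemma of_nat_dvd_if_right_factor_of_norm_sq:
  assumes "a \<in> H122" "b \<in> H122" "\<delta> \<in> H122" "\<alpha> = a * \<delta>" "of_nat p = b * \<delta>"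
    and "hnorm \<delta> = p^2" "p \<noteq> 0"
  shows "\<exists>z\<in>H122. \<alpha> = of_nat p * z"
proof -
  have "p^2 = hnorm b * p^2"
    using hnorm_mult[OF assms(2,3)] assms(5,6) by (metis hnorm_of_nat)
  then have "hnorm b = 1"
    using assms(7) by simp
  then obtain w where w: "w \<in> H122" "w * b = 1"
    using assms(2) H122_unit_inverse by (auto simp: H122_unit_iff_hnorm)
  then have "\<delta> = w * of_nat p"
    by (simp add: assms(5) mult.assoc[symmetric])
  then have "\<alpha> = of_nat p * (a * w)"
    using assms(4) by (metis mult.assoc mult_of_nat_commute)
  then show ?thesis
    using H122_mult[OF assms(1) w(1)] by blast
qed

lemma H122_right_factor_of_prime_norm:
  assumes \<alpha>: "\<alpha> \<in> H122" and p: "prime p" "p dvd hnorm \<alpha>"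
    and not_dvd: "\<not> (\<exists>z\<in>H122. \<alpha> = of_nat p * z)"
  obtains a \<delta> where "a \<in> H122" "\<delta> \<in> H122" "\<alpha> = a * \<delta>" "hnorm \<delta> = p"
proof -
  have p0: "p \<noteq> 0"
    using p(1) by auto
  then have "(of_nat p :: quat) \<noteq> 0"
    by (simp add: of_nat_quat zero_quat_def)
  then obtain \<delta> x y a b where xyab: "x \<in> H122" "y \<in> H122" "a \<in> H122" "b \<in> H122"
    and gcd: "\<delta> = x * \<alpha> + y * of_nat p" "\<alpha> = a * \<delta>" "of_nat p = b * \<delta>"
    by (rule H122_left_gcd[OF \<alpha> H122_of_nat])
  have \<delta>: "\<delta> \<in> H122"
    unfolding gcd(1) using xyab \<alpha> by (intro H122_add H122_mult H122_of_nat)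
  have not_unit: "\<not> H122_unit \<delta>"
  proof
    assume "H122_unit \<delta>"
    then obtain w where w: "w \<in> H122" "w * \<delta> = 1"
      by (rule H122_unit_inverse)
    then have "(w * x) * \<alpha> + (w * y) * of_nat p = 1"
      by (simp add: gcd(1) distrib_left mult.assoc)
    then show False
      using of_nat_dvd_if_comaximal[OF \<alpha> p(2) H122_mult[OF w(1) xyab(1)] H122_mult[OF w(1) xyab(2)]]
        not_dvd by blast
  qed
  have norm_p: "p^2 = hnorm b * hnorm \<delta>"
    using hnorm_mult[OF xyab(4) \<delta>] gcd(3) by (metis hnorm_of_nat)
  then obtain i where i: "i \<le> 2" "hnorm \<delta> = p ^ i"
    using divides_primepow_nat[OF p(1), of "hnorm \<delta>" 2] by (metis dvd_triv_right)
  moreover have "i \<noteq> 0"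
    using i not_unit \<delta> by (auto simp: H122_unit_iff_hnorm)
  moreover have "i \<noteq> 2"
    using of_nat_dvd_if_right_factor_of_norm_sq[OF xyab(3,4) \<delta> gcd(2,3) _ p0]
      i(2) not_dvd by auto
  ultimately have "hnorm \<delta> = p"
    by (cases i) (auto simp: numeral_2_eq_2 less_Suc_eq_le le_Suc_eq)
  then show ?thesis
    using that xyab(3) \<delta> gcd(2) by blast
qed

lemma prime_is_hnorm:
  assumes p: "prime p"
  obtains \<rho> where "\<rho> \<in> H122" "hnorm \<rho> = p"
proof (cases "p = 2")
  case True
  then show ?thesis
    using that[of "hq 1 1 0 0"] by (simp add: hnorm_hq)
next
  case False
  then have "odd p"
    using p prime_ge_2_nat[OF p] by (intro prime_odd_nat) auto
  then obtain x y :: int where xy: "int p dvd x^2 + y^2 + 2"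
    using odd_prime_dvd_two_squares_plus[OF p] by blast
  define \<alpha> where "\<alpha> = hq (x - 1) (y - 1) 2 0"
  have "int (hnorm \<alpha>) = x^2 + y^2 + 2"
    by (simp add: \<alpha>_def hnorm_hq power2_eq_square algebra_simps add_nonneg_nonneg)
  then have "p dvd hnorm \<alpha>"
    using xy by (metis int_dvd_int_iff)
  moreover have "\<not> (\<exists>z\<in>H122. \<alpha> = of_nat p * z)"
  proof
    assume "\<exists>z\<in>H122. \<alpha> = of_nat p * z"
    then obtain a b c d where "\<alpha> = of_nat p * hq a b c d"
      by (blast elim: H122E)
    then have "qj \<alpha> = qj (of_nat p * hq a b c d)"
      by simp
    then have "sqrt 2 = real p * (c * sqrt 2 / 2)"
      by (simp add: \<alpha>_def hq_def of_nat_quat)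
    then have "real_of_int 2 = real_of_int (int p * c)"
      by (simp add: field_simps)
    then have "int p dvd 2"
      by (simp only: of_int_eq_iff) (metis dvd_triv_left)
    then have "p \<le> 2"
      by (simp add: dvd_imp_le flip: int_dvd_int_iff)
    then show False
      using prime_ge_2_nat[OF p] False by simp
  qed
  ultimately show ?thesis
    using H122_right_factor_of_prime_norm[of \<alpha> p] p that \<alpha>_def by auto
qed

lemma H122_prime_not_of_nat_dvd:
  assumes "H122_prime \<pi>" "prime p"
  shows "\<not> (\<exists>z\<in>H122. \<pi> = of_nat p * z)"
proof
  assume "\<exists>z\<in>H122. \<pi> = of_nat p * z"
  then obtain z where z: "z \<in> H122" "\<pi> = of_nat p * z"
    by blast
  obtain \<rho> where \<rho>: "\<rho> \<in> H122" "hnorm \<rho> = p"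
    using prime_is_hnorm[OF assms(2)] .
  have cofactor: "qcnj \<rho> * z \<in> H122"
    using H122_mult[OF H122_qcnj[OF \<rho>(1)] z(1)] .
  have "\<pi> = \<rho> * (qcnj \<rho> * z)"
    using z(2) of_nat_hnorm[OF \<rho>(1)] \<rho>(2) by (simp add: mult.assoc)
  then have "H122_unit \<rho> \<or> H122_unit (qcnj \<rho> * z)"
    using assms(1) \<rho>(1) cofactor by (auto simp: H122_prime_def)
  moreover have "hnorm (qcnj \<rho> * z) = p * hnorm z"
    using hnorm_mult[OF H122_qcnj[OF \<rho>(1)] z(1)] \<rho>(2) by simp
  ultimately show False
    using \<rho>(2) assms(2) by (auto simp: H122_unit_iff_hnorm)
qed

lemma prime_hnorm_if_H122_prime:
  assumes \<pi>: "H122_prime \<pi>"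
  shows "prime (hnorm \<pi>)"
proof -
  have "\<pi> \<in> H122" "hnorm \<pi> \<noteq> 1" "hnorm \<pi> \<noteq> 0"
    using \<pi> hnorm_eq_0_iff by (auto simp: H122_prime_def H122_unit_iff_hnorm)
  then obtain p where p: "prime p" "p dvd hnorm \<pi>"
    using prime_factor_nat by blast
  then obtain a \<delta> where a\<delta>: "a \<in> H122" "\<delta> \<in> H122" "\<pi> = a * \<delta>" "hnorm \<delta> = p"
    using H122_right_factor_of_prime_norm H122_prime_not_of_nat_dvd \<pi> \<open>\<pi> \<in> H122\<close> by metis
  then have "\<not> H122_unit \<delta>"
    using p(1) by (auto simp: H122_unit_iff_hnorm)
  then have "hnorm a = 1"
    using \<pi> a\<delta> by (auto simp: H122_prime_def H122_unit_iff_hnorm)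
  then show ?thesis
    using p(1) a\<delta> hnorm_mult by simp
qed

lemma H122_prime_if_prime_hnorm:
  assumes \<pi>: "\<pi> \<in> H122" and p: "prime (hnorm \<pi>)"
  shows "H122_prime \<pi>"
proof -
  have "H122_unit a \<or> H122_unit b" if "a \<in> H122" "b \<in> H122" "\<pi> = a * b" for a b
    using p prime_product[of "hnorm a" "hnorm b"] that
    by (auto simp: hnorm_mult H122_unit_iff_hnorm)
  then show ?thesis
    using \<pi> p hnorm_eq_0_iff[OF \<pi>] unfolding H122_prime_def H122_unit_iff_hnorm
    by (metis not_prime_0 not_prime_1)
qed

theorem theorem37:
  assumes "\<pi> \<in> H122"
  shows "H122_prime \<pi> \<longleftrightarrow> (\<exists>p::nat. prime p \<and> qnorm \<pi> = of_nat p)"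
  using assms prime_hnorm_if_H122_prime H122_prime_if_prime_hnorm
  by (auto simp: qnorm_eq_of_nat_iff_hnorm)

end
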